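(* Let $\epsilon_1,\epsilon_2,\dots$ be independent Rademacher random variables and $S_m=\epsilon_1+\dots+\epsilon_m$. Let $k\ge2$ be an integer and for $i=0,1,\dots,k-1$ let $$\delta_i:=\mathbb{P}\{S_{k^2+2i-1}=k+1\}-\mathbb{P}\{S_{k^2+2i}=k\}=\frac{\binom{k^2-1+2i}{k(k-1)/2+i-1}}{2^{k^2-1+2i}}-\frac{\binom{k^2+2i}{k(k-1)/2+i}}{2^{k^2+2i}}.$$ Then $$\delta_0\le\delta_1\le\dots\le\delta_{k-1}<0.$$
   Context: A Rademacher random variable takes the values $1$ and $-1$ each with probability $1/2$. *)

theory Defs
  imports "HOL-Probability.Probability"
begin

text \<open>eps 1, eps 2, ... are independent Rademacher random variables on the probability space M
  (index 0 is unused).\<close>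
definition rademacher_seq :: "'a measure \<Rightarrow> (nat \<Rightarrow> 'a \<Rightarrow> real) \<Rightarrow> bool" where
  "rademacher_seq M eps \<longleftrightarrow>
     prob_space.indep_vars M (\<lambda>_. borel) eps {1..} \<and>
     (\<forall>i\<ge>1. measure M {\<omega> \<in> space M. eps i \<omega> = 1} = 1/2 \<and>
             measure M {\<omega> \<in> space M. eps i \<omega> = -1} = 1/2)"

definition partial_sum :: "(nat \<Rightarrow> 'a \<Rightarrow> real) \<Rightarrow> nat \<Rightarrow> 'a \<Rightarrow> real" where
  "partial_sum eps m \<omega> = (\<Sum>j\<in>{1..m}. eps j \<omega>)"

definition delta :: "'a measure \<Rightarrow> (nat \<Rightarrow> 'a \<Rightarrow> real) \<Rightarrow> nat \<Rightarrow> nat \<Rightarrow> real" where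
  "delta M eps k i =
     measure M {\<omega> \<in> space M. partial_sum eps (k^2 + 2*i - 1) \<omega> = real k + 1}
   - measure M {\<omega> \<in> space M. partial_sum eps (k^2 + 2*i) \<omega> = real k}"

end

theory Submission
  imports Defs
begin

text \<open>
  Counting sign vectors gives P{S_m = 2r - m} = C(m,r) / 2^m. With m = k^2 + 2i and
  b = (m + k) / 2 this turns delta_i into C(m-1,b) / 2^(m-1) - C(m,b) / 2^m = -k C(m,b) / (m 2^m),
  which is negative. Monotonicity (for every i, not only i < k - 1) amounts to
  m C(m+2,b+1) <= 4 (m+2) C(m,b); by (b+1)(m+1-b) C(m+2,b+1) = (m+1)(m+2) C(m,b) and
  4 (b+1)(m+1-b) = (m+2)^2 - k^2 this reduces to k^2 <= 3m + 4, true because m >= k^2.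
\<close>

lemma sum_sign_vector:
  assumes "finite I" "s \<in> I \<rightarrow> {-1, 1::real}"
  shows "(\<Sum>i\<in>I. s i) = 2 * real (card {i\<in>I. s i = 1}) - real (card I)"
proof -
  have "(\<Sum>i\<in>I. s i) = (\<Sum>i\<in>I. 2 * of_bool (s i = 1) - 1)"
    using assms(2) by (intro sum.cong) auto
  also have "\<dots> = 2 * real (card (I \<inter> {i. s i = 1})) - real (card I)"
    using assms(1) by (simp add: sum_subtractf sum_distrib_left[symmetric])
  also have "I \<inter> {i. s i = 1} = {i\<in>I. s i = 1}"
    by blast
  finally show ?thesis .
qed

lemma card_sign_vectors_with_sum:
  assumes "finite I"
  shows "card {s \<in> I \<rightarrow>\<^sub>E {-1, 1::real}. (\<Sum>i\<in>I. s i) = 2 * real r - real (card I)}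
         = card I choose r"
proof -
  let ?T = "{s \<in> I \<rightarrow>\<^sub>E {-1, 1::real}. (\<Sum>i\<in>I. s i) = 2 * real r - real (card I)}"
  define signs :: "'a set \<Rightarrow> 'a \<Rightarrow> real"
    where "signs B = restrict (\<lambda>i. if i \<in> B then 1 else -1) I" for B
  have signs_pos: "{i\<in>I. signs B i = 1} = B" if "B \<subseteq> I" for B
    using that by (auto simp: signs_def)
  have "bij_betw (\<lambda>s. {i\<in>I. s i = 1}) ?T {B. B \<subseteq> I \<and> card B = r}"
  proof (rule bij_betw_byWitness[where f' = signs])
    show "\<forall>s\<in>?T. signs {i\<in>I. s i = 1} = s"
      by (force simp: signs_def PiE_def extensional_def)
    show "\<forall>B\<in>{B. B \<subseteq> I \<and> card B = r}. {i\<in>I. signs B i = 1} = B"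
      using signs_pos by blast
    show "(\<lambda>s. {i\<in>I. s i = 1}) ` ?T \<subseteq> {B. B \<subseteq> I \<and> card B = r}"
      using sum_sign_vector[OF assms] by (auto simp: PiE_def)
    have "signs B \<in> ?T" if "B \<subseteq> I" "card B = r" for B
    proof -
      have "signs B \<in> I \<rightarrow>\<^sub>E {-1, 1}"
        by (simp add: signs_def)
      moreover from this have "(\<Sum>i\<in>I. signs B i) = 2 * real r - real (card I)"
        using sum_sign_vector[OF assms, of "signs B"] signs_pos[OF that(1)] that(2) by (simp add: PiE_iff)
      ultimately show ?thesis
        by blast
    qed
    then show "signs ` {B. B \<subseteq> I \<and> card B = r} \<subseteq> ?T"
      by blast
  qed
  then have "card ?T = card {B. B \<subseteq> I \<and> card B = r}"
    by (rule bij_betw_same_card)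
  with n_subsets[OF assms] show ?thesis
    by simp
qed

definition binomial_weight :: "nat \<Rightarrow> nat \<Rightarrow> real" where
  "binomial_weight m b = real (m choose b) / (real m * 2^m)"

lemma binomial_weight_pos: "0 < m \<Longrightarrow> b \<le> m \<Longrightarrow> 0 < binomial_weight m b"
  by (simp add: binomial_weight_def)

lemma choose_add_two_step:
  assumes "b \<le> m"
  shows "(b + 1) * (m + 1 - b) * ((m + 2) choose (b + 1)) = (m + 2) * (m + 1) * (m choose b)"
proof -
  have "(b + 1) * ((m + 2) choose (b + 1)) = (m + 2) * ((m + 1) choose b)"
    using binomial_absorption[of b "m + 2"] by simp
  moreover have "(m + 1 - b) * ((m + 1) choose b) = (m + 1) * (m choose b)"
    using binomial_absorb_comp[of "m + 1" b] by simp
  ultimately show ?thesis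
    by (metis mult.assoc mult.left_commute)
qed

lemma choose_pred_diff_binomial_weight:
  assumes "0 < m"
  shows "real ((m - 1) choose b) / 2^(m - 1) - real (m choose b) / 2^m
         = (real m - 2 * real b) * binomial_weight m b"
proof -
  have absorb: "real m * real ((m - 1) choose b) = (real m - real b) * real (m choose b)"
  proof (cases "b \<le> m")
    case True
    then show ?thesis
      using arg_cong[OF binomial_absorb_comp[of m b], of real] by (simp add: of_nat_diff)
  next
    case False
    then show ?thesis
      by (simp add: binomial_eq_0)
  qed
  have "(2::real)^m = 2 * 2^(m - 1)"
    using assms by (cases m) auto
  then have "real ((m - 1) choose b) / 2^(m - 1) - real (m choose b) / 2^m
             = (2 * (real m * real ((m - 1) choose b)) - real m * real (m choose b)) / (real m * 2^m)"
    using assms by (simp add: field_simps)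
  also have "\<dots> = (real m - 2 * real b) * binomial_weight m b"
    unfolding absorb binomial_weight_def by (simp add: field_simps)
  finally show ?thesis .
qed

lemma binomial_weight_step_le:
  assumes "b \<le> m" "0 < m" "2 * b = m + k" "k^2 \<le> 3 * m + 4"
  shows "binomial_weight (m + 2) (b + 1) \<le> binomial_weight m b"
proof -
  define C where "C = real (m choose b)"
  define D where "D = real ((m + 2) choose (b + 1))"
  have recurrence: "(real b + 1) * (real m + 1 - real b) * D = (real m + 2) * (real m + 1) * C"
    using arg_cong[OF choose_add_two_step[OF assms(1)], of real] assms(1)
    unfolding C_def D_def by (simp add: of_nat_diff del: binomial_Suc_Suc) algebra
  have "real m * (real m + 1) \<le> 4 * (real b + 1) * (real m + 1 - real b)"
  proof -
    have "2 * real b = real m + real k" "real k ^ 2 \<le> 3 * real m + 4"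
      using assms(3,4) by (simp_all flip: of_nat_power)
    have "4 * (real b + 1) * (real m + 1 - real b) = (2 * real b + 2) * (2 * real m + 2 - 2 * real b)"
      by (simp add: algebra_simps)
    also have "\<dots> = (real m + 2)^2 - real k ^ 2"
      unfolding \<open>2 * real b = real m + real k\<close> by (simp add: algebra_simps power2_eq_square)
    finally show ?thesis
      using \<open>real k ^ 2 \<le> 3 * real m + 4\<close> by (simp add: algebra_simps power2_eq_square)
  qed
  then have "real m * (real m + 1) * D \<le> 4 * (real b + 1) * (real m + 1 - real b) * D"
    by (rule mult_right_mono) (simp add: D_def)
  also have "\<dots> = 4 * (real m + 2) * (real m + 1) * C"
    using arg_cong[OF recurrence, of "(*) 4"] by (simp only: mult.assoc)
  finally have "(real m + 1) * (real m * D) \<le> (real m + 1) * (4 * (real m + 2) * C)"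
    by (simp add: algebra_simps)
  then have "real m * D \<le> 4 * (real m + 2) * C"
    by (rule mult_left_le_imp_le) simp
  have "binomial_weight (m + 2) (b + 1) = D / (4 * (real m + 2) * 2^m)"
    unfolding binomial_weight_def D_def[symmetric] by (simp add: power_add mult_ac)
  also have "\<dots> = real m * D / (real m * (4 * (real m + 2) * 2^m))"
    using assms(2) by simp
  also have "\<dots> \<le> 4 * (real m + 2) * C / (real m * (4 * (real m + 2) * 2^m))"
    using \<open>real m * D \<le> 4 * (real m + 2) * C\<close> by (rule divide_right_mono) simp
  also have "\<dots> = 4 * (real m + 2) * C / (4 * (real m + 2) * (real m * 2^m))"
    by (simp only: mult_ac)
  also have "\<dots> = binomial_weight m b"
    unfolding binomial_weight_def C_def[symmetric] by simp
  finally show ?thesis .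
qed

locale rademacher_sequence = prob_space +
  fixes eps :: "nat \<Rightarrow> 'a \<Rightarrow> real"
  assumes rademacher: "rademacher_seq M eps"
begin

lemma indep_eps: "indep_vars (\<lambda>_. borel) eps {1..}"
  using rademacher by (simp add: rademacher_seq_def)

lemma measurable_eps: "i \<ge> 1 \<Longrightarrow> eps i \<in> borel_measurable M"
  using indep_eps by (auto simp: indep_vars_def2)

lemma prob_eps_eq_sign:
  assumes "i \<ge> 1" "c \<in> {-1, 1}"
  shows "prob {\<omega>\<in>space M. eps i \<omega> = c} = 1/2"
  using rademacher assms by (auto simp: rademacher_seq_def)

lemma prob_sign_pattern:
  assumes "s \<in> {1..m} \<rightarrow> {-1, 1}"
  shows "prob {\<omega>\<in>space M. \<forall>i\<in>{1..m}. eps i \<omega> = s i} = (1/2)^m"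
proof (cases "m = 0")
  case True
  then show ?thesis
    by (simp add: prob_space)
next
  case False
  then have "{\<omega>\<in>space M. \<forall>i\<in>{1..m}. eps i \<omega> = s i} = (\<Inter>i\<in>{1..m}. eps i -` {s i} \<inter> space M)"
    by auto
  also have "prob \<dots> = (\<Prod>i\<in>{1..m}. prob (eps i -` {s i} \<inter> space M))"
    using False by (intro indep_varsD[OF indep_eps]) auto
  also have "\<dots> = (\<Prod>i\<in>{1..m}. 1/2)"
  proof (rule prod.cong)
    fix i assume i: "i \<in> {1..m}"
    then have "s i \<in> {-1, 1}"
      using assms by auto
    moreover have "eps i -` {s i} \<inter> space M = {\<omega>\<in>space M. eps i \<omega> = s i}"
      by blast
    ultimately show "prob (eps i -` {s i} \<inter> space M) = 1/2"
      using prob_eps_eq_sign[of i "s i"] i by simp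
  qed simp
  finally show ?thesis
    by simp
qed

lemma sets_eps_eq: "i \<ge> 1 \<Longrightarrow> {\<omega>\<in>space M. eps i \<omega> = c} \<in> sets M"
  using measurable_sets[OF measurable_eps, of i "{c}"] by (simp add: vimage_def Int_def conj_commute)

lemma AE_signs: "AE \<omega> in M. \<forall>i\<in>{1..m}. eps i \<omega> \<in> {-1, 1}"
proof (rule AE_finite_allI)
  fix i assume i: "i \<in> {1..m}"
  have "{\<omega>\<in>space M. eps i \<omega> \<in> {-1, 1}} = {\<omega>\<in>space M. eps i \<omega> = 1} \<union> {\<omega>\<in>space M. eps i \<omega> = -1}"
    by auto
  also have "prob \<dots> = 1/2 + 1/2"
    using i sets_eps_eq[of i] prob_eps_eq_sign[of i 1] prob_eps_eq_sign[of i "-1"]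
    by (subst finite_measure_Union) auto
  finally have "AE \<omega> in M. \<omega> \<in> {\<omega>\<in>space M. eps i \<omega> \<in> {-1, 1}}"
    by (intro AE_prob_1) simp
  then show "AE \<omega> in M. eps i \<omega> \<in> {-1, 1}"
    by auto
qed simp

lemma prob_partial_sum_eq:
  assumes "r \<le> m"
  shows "prob {\<omega>\<in>space M. partial_sum eps m \<omega> = 2 * real r - real m} = real (m choose r) / 2^m"
proof -
  let ?x = "2 * real r - real m"
  let ?T = "{s \<in> {1..m} \<rightarrow>\<^sub>E {-1, 1::real}. (\<Sum>i\<in>{1..m}. s i) = ?x}"
  let ?E = "\<lambda>s. {\<omega>\<in>space M. \<forall>i\<in>{1..m}. eps i \<omega> = s i}"
  have fin_T: "finite ?T"
    by (rule finite_subset[of _ "{1..m} \<rightarrow>\<^sub>E {-1, 1}"]) (auto intro: finite_PiE)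
  have sets_E: "?E s \<in> sets M" for s
    using sets_eps_eq by (intro sets.sets_Collect_finite_All) auto
  have "partial_sum eps m \<in> borel_measurable M"
    unfolding partial_sum_def[abs_def] using measurable_eps by auto
  then have sets_event: "{\<omega>\<in>space M. partial_sum eps m \<omega> = ?x} \<in> sets M"
    by (simp add: borel_measurable_vimage)
  have "AE \<omega> in M. \<omega> \<in> {\<omega>\<in>space M. partial_sum eps m \<omega> = ?x} \<longleftrightarrow> \<omega> \<in> (\<Union>s\<in>?T. ?E s)"
    using AE_signs[of m]
  proof eventually_elim
    case (elim \<omega>)
    show ?case
    proof
      assume \<omega>: "\<omega> \<in> {\<omega>\<in>space M. partial_sum eps m \<omega> = ?x}"
      then have "restrict (\<lambda>i. eps i \<omega>) {1..m} \<in> ?T"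
        using elim by (auto simp: partial_sum_def)
      moreover have "\<omega> \<in> ?E (restrict (\<lambda>i. eps i \<omega>) {1..m})"
        using \<omega> by auto
      ultimately show "\<omega> \<in> (\<Union>s\<in>?T. ?E s)"
        by blast
    next
      assume "\<omega> \<in> (\<Union>s\<in>?T. ?E s)"
      then obtain s where s: "s \<in> ?T" "\<omega> \<in> ?E s"
        by blast
      then have "partial_sum eps m \<omega> = (\<Sum>i\<in>{1..m}. s i)"
        by (auto simp: partial_sum_def intro: sum.cong)
      with s show "\<omega> \<in> {\<omega>\<in>space M. partial_sum eps m \<omega> = ?x}"
        by auto
    qed
  qed
  then have "prob {\<omega>\<in>space M. partial_sum eps m \<omega> = ?x} = prob (\<Union>s\<in>?T. ?E s)"
    using fin_T sets_E sets_event by (intro finite_measure_eq_AE) auto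
  also have "\<dots> = (\<Sum>s\<in>?T. prob (?E s))"
  proof (rule finite_measure_finite_Union[OF fin_T])
    show "?E ` ?T \<subseteq> sets M"
      using sets_E by auto
    show "disjoint_family_on ?E ?T"
      unfolding disjoint_family_on_def
    proof (intro ballI impI)
      fix s t assume "s \<in> ?T" "t \<in> ?T" "s \<noteq> t"
      then obtain i where "i \<in> {1..m}" "s i \<noteq> t i"
        by (metis (no_types, lifting) PiE_ext mem_Collect_eq)
      then show "?E s \<inter> ?E t = {}"
        by auto
    qed
  qed
  also have "\<dots> = (\<Sum>s\<in>?T. (1/2)^m)"
    using prob_sign_pattern by (intro sum.cong) (auto simp: PiE_def)
  also have "\<dots> = real (m choose r) / 2^m"
    using card_sign_vectors_with_sum[of "{1..m}" r] by (simp add: power_one_over)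
  finally show ?thesis .
qed

lemma delta_eq:
  assumes "k \<ge> 2"
  shows "delta M eps k i = - real k * binomial_weight (k^2 + 2 * i) ((k^2 + k) div 2 + i)"
proof -
  define m where "m = k^2 + 2 * i"
  define b where "b = (k^2 + k) div 2 + i"
  have "even (k^2 + k)"
    by simp
  then have b: "2 * b = m + k"
    unfolding b_def m_def by (auto elim!: evenE)
  have "2 * k \<le> k * k"
    using mult_le_mono1[OF assms] .
  then have "k + 2 \<le> k^2"
    unfolding power2_eq_square using assms by linarith
  then have "b \<le> m - 1" "0 < m"
    using b unfolding m_def by linarith+
  have k_succ: "real k + 1 = 2 * real b - real (m - 1)" and k: "real k = 2 * real b - real m"
    using b \<open>0 < m\<close> by (simp_all add: of_nat_diff flip: of_nat_mult)
  have "delta M eps k i = prob {\<omega>\<in>space M. partial_sum eps (m - 1) \<omega> = 2 * real b - real (m - 1)}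
                        - prob {\<omega>\<in>space M. partial_sum eps m \<omega> = 2 * real b - real m}"
    unfolding delta_def m_def[symmetric] k_succ by (simp only: k)
  also have "\<dots> = real ((m - 1) choose b) / 2^(m - 1) - real (m choose b) / 2^m"
    using \<open>b \<le> m - 1\<close> by (simp only: prob_partial_sum_eq)
  also have "\<dots> = - real k * binomial_weight m b"
    unfolding choose_pred_diff_binomial_weight[OF \<open>0 < m\<close>] k by (simp add: algebra_simps)
  finally show ?thesis
    unfolding m_def b_def .
qed

end

theorem lemma2p2:
  fixes M :: "'a measure" and eps :: "nat \<Rightarrow> 'a \<Rightarrow> real" and k :: nat
  assumes "prob_space M"
    and "rademacher_seq M eps"
    and "k \<ge> 2"
  shows "(\<forall>i. i + 1 \<le> k - 1 \<longrightarrow> delta M eps k i \<le> delta M eps k (i + 1))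
         \<and> delta M eps k (k - 1) < 0"
proof -
  interpret rademacher_sequence M eps
    using assms(1,2) by (simp add: rademacher_sequence_def rademacher_sequence_axioms_def)
  define m where "m i = k^2 + 2 * i" for i
  define b where "b i = (k^2 + k) div 2 + i" for i
  have delta: "delta M eps k i = - real k * binomial_weight (m i) (b i)" for i
    unfolding m_def b_def using delta_eq[OF assms(3)] .
  have "even (k^2 + k)"
    by simp
  then have b: "2 * b i = m i + k" for i
    unfolding b_def m_def by (auto elim!: evenE)
  have "k \<le> k^2"
    by (simp add: power2_eq_square)
  then have m: "0 < m i" "k \<le> m i" for i
    using assms(3) by (auto simp: m_def)
  have "binomial_weight (m (i + 1)) (b (i + 1)) \<le> binomial_weight (m i) (b i)" for i
    using binomial_weight_step_le[OF _ m(1) b, of i] b[of i] m(2)[of i]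
    by (simp add: m_def b_def power2_eq_square)
  moreover have "0 < binomial_weight (m i) (b i)" for i
    using binomial_weight_pos[OF m(1)] b[of i] m(2)[of i] by simp
  ultimately show ?thesis
    using assms(3) by (simp add: delta mult_left_mono)
qed

end
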